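(* Let $\mathcal H$ be a complex Hilbert space and let $T\in\mathcal B(\mathcal H)$ be weakly concave. Let $T'=T(T^*T)^{-1}$ be its Cauchy dual, and let $$\mathcal H_u:=\bigcap_{n=0}^{\infty}\mathcal R(T^n),\qquad \mathcal H'_u:=\bigcap_{n=0}^{\infty}\mathcal R(T'^n),$$ where $\mathcal R(\cdot)$ denotes the range. Then $\mathcal H'_u\subseteq\mathcal H_u$ and $\mathcal H'_u$ reduces $T$. Moreover, $T=U\oplus S$ with respect to the decomposition $\mathcal H=\mathcal H'_u\oplus(\mathcal H'_u)^{\perp}$, where $U\in\mathcal B(\mathcal H'_u)$ is unitary and $S\in\mathcal B((\mathcal H'_u)^{\perp})$ has the wandering subspace property.
   Context: $\mathcal B(\mathcal H)$ is the algebra of bounded operators on $\mathcal H$. An operator $T$ is left-invertible if $LT=I$ for some $L\in\mathcal B(\mathcal H)$ (equivalently $T^*T$ is invertible); then its Cauchy dual is $T'=T(T^*T)^{-1}$. The approximate point spectrum $\sigma_{ap}(T)$ is the set of $\lambda\in\mathbb C$ with $T-\lambda I$ not bounded below; $\mathbb D$ is the open unit disc and $\partial\mathbb D$ the unit circle. A left-invertible $T$ is weakly concave if (1) $\sigma_{ap}(T)\subseteq\partial\mathbb D$, (2) $\|x\|\le\|Tx\|$ for all $x\in\mathcal H$, and (3) $\|T'T^*x\|\le\|T'Tx\|$ for all $x\in\mathcal H$. An operator $S$ on a Hilbert space $\mathcal K$ has the wandering subspace property if $\mathcal K$ is the closed linear span of $\bigcup_{n\ge0}S^n(\ker S^* )$.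 *)

theory Defs
  imports "HOL-Analysis.Analysis"
begin

text \<open>A complex Hilbert space is modelled by its realification: a real Hilbert space
  (type class real_inner + complete_space) together with a complex structure J
  (multiplication by the imaginary unit), which is real-linear, satisfies J(Jx) = -x
  and preserves the real inner product. The complex inner product is then
  <x,y>_C = x \<bullet> y + i (x \<bullet> J y), and scalar multiplication by c is
  Re c *R x + Im c *R J x.\<close>

definition complex_structure :: "('a::real_inner \<Rightarrow> 'a) \<Rightarrow> bool" where
  "complex_structure J \<longleftrightarrow> linear J \<and> (\<forall>x. J (J x) = - x) \<and> (\<forall>x y. J x \<bullet> J y = x \<bullet> y)"

definition cscale :: "('a::real_vector \<Rightarrow> 'a) \<Rightarrow> complex \<Rightarrow> 'a \<Rightarrow> 'a" where
  "cscale J c x = Re c *\<^sub>R x + Im c *\<^sub>R J x"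

definition bounded_clinear_op :: "('a::real_normed_vector \<Rightarrow> 'a) \<Rightarrow> ('a \<Rightarrow> 'a) \<Rightarrow> bool" where
  "bounded_clinear_op J T \<longleftrightarrow> bounded_linear T \<and> (\<forall>x. T (J x) = J (T x))"

definition cspan :: "('a::real_vector \<Rightarrow> 'a) \<Rightarrow> 'a set \<Rightarrow> 'a set" where
  "cspan J A = span (A \<union> J ` A)"

definition csubspace :: "('a::real_vector \<Rightarrow> 'a) \<Rightarrow> 'a set \<Rightarrow> bool" where
  "csubspace J M \<longleftrightarrow> subspace M \<and> J ` M \<subseteq> M"

definition left_invertible :: "('a::real_normed_vector \<Rightarrow> 'a) \<Rightarrow> ('a \<Rightarrow> 'a) \<Rightarrow> bool" where
  "left_invertible J T \<longleftrightarrow> (\<exists>L. bounded_clinear_op J L \<and> (\<forall>x. L (T x) = x))"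

definition cauchy_dual :: "('a::real_inner \<Rightarrow> 'a) \<Rightarrow> 'a \<Rightarrow> 'a" where
  "cauchy_dual T = T \<circ> inv (adjoint T \<circ> T)"

definition bounded_below :: "('a::real_normed_vector \<Rightarrow> 'a) \<Rightarrow> bool" where
  "bounded_below T \<longleftrightarrow> (\<exists>c>0. \<forall>x. c * norm x \<le> norm (T x))"

definition approx_point_spectrum :: "('a::real_normed_vector \<Rightarrow> 'a) \<Rightarrow> ('a \<Rightarrow> 'a) \<Rightarrow> complex set" where
  "approx_point_spectrum J T = {c. \<not> bounded_below (\<lambda>x. T x - cscale J c x)}"

definition weakly_concave :: "('a::real_inner \<Rightarrow> 'a) \<Rightarrow> ('a \<Rightarrow> 'a) \<Rightarrow> bool" where
  "weakly_concave J T \<longleftrightarrow> bounded_clinear_op J T \<and> left_invertible J T \<and>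
     approx_point_spectrum J T \<subseteq> sphere 0 1 \<and>
     (\<forall>x. norm x \<le> norm (T x)) \<and>
     (\<forall>x. norm (cauchy_dual T (adjoint T x)) \<le> norm (cauchy_dual T (T x)))"

definition reduces :: "('a::real_inner \<Rightarrow> 'a) \<Rightarrow> 'a set \<Rightarrow> ('a \<Rightarrow> 'a) \<Rightarrow> bool" where
  "reduces J M T \<longleftrightarrow> csubspace J M \<and> closed M \<and> T ` M \<subseteq> M \<and> adjoint T ` M \<subseteq> M"

definition unitary_on :: "'a set \<Rightarrow> ('a::real_inner \<Rightarrow> 'a) \<Rightarrow> bool" where
  "unitary_on M T \<longleftrightarrow> T ` M \<subseteq> M \<and> adjoint T ` M \<subseteq> M \<and>
     (\<forall>x\<in>M. adjoint T (T x) = x \<and> T (adjoint T x) = x)"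

definition wandering_subspace_property ::
  "('a::real_normed_vector \<Rightarrow> 'a) \<Rightarrow> 'a set \<Rightarrow> ('a \<Rightarrow> 'a) \<Rightarrow> ('a \<Rightarrow> 'a) \<Rightarrow> bool" where
  "wandering_subspace_property J K S Sadj \<longleftrightarrow>
     K = closure (cspan J (\<Union>n. (S ^^ n) ` {x\<in>K. Sadj x = 0}))"

end

(* The Cauchy dual T' = T (T* T)^-1 of a weakly concave T satisfies T* T' = I and
   ||T'|| <= 1, and T' T* is the orthogonal projection onto the range of T.  On
   H'_u = Inter_n range (T'^n) the adjoint T* acts as a right inverse of T', and
   condition (3) of weak concavity makes k |-> ||T*^k w|| log-convex.  So if
   ||T' w|| < ||w|| for some w in H'_u, then ||T*^k w|| grows geometrically with ratio
   ||T* w|| / ||w|| > 1.  This contradicts the spectral radius bound: since the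
   approximate point spectrum lies on the unit circle, I - mu T is invertible for
   |mu| < 1, the functions mu |-> <x, (I - mu T)^-1 y> are holomorphic on the disc with
   Taylor coefficients <x, T^n y>, and Cauchy's estimates give ||T^n|| = O(s^n) for
   every s > 1.  Hence T' is isometric on H'_u, which forces (T* T)^-1 = I there, so T
   coincides with T' on H'_u and is unitary on it.  Finally, x is orthogonal to T^k e
   for all k and all e in ker T* exactly when T*^k x stays in the range of T' for every
   k, that is, when x lies in H'_u; so the orthogonal complement of H'_u is generated by
   the wandering subspace ker T*. *)

theory Submission
  imports Defs "HOL-Complex_Analysis.Complex_Analysis"
begin

section \<open>Orthogonal projections, Riesz representation and adjoints\<close>

lemma subspace_closure:
  fixes S :: "'a::real_normed_vector set"
  assumes "subspace S"
  shows "subspace (closure S)"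
  unfolding subspace_def
proof (intro conjI ballI allI)
  show "0 \<in> closure S"
    using assms closure_subset subspace_0 by blast
  show "x + y \<in> closure S" if "x \<in> closure S" "y \<in> closure S" for x y
  proof -
    have "x + y \<in> closure (S + S)"
      using closure_sum[of S S] that by (auto intro: set_plus_intro)
    moreover have "S + S \<subseteq> S"
      using assms by (auto simp: set_plus_def subspace_add)
    ultimately show ?thesis
      using closure_mono by blast
  qed
  show "c *\<^sub>R x \<in> closure S" if "x \<in> closure S" for c x
  proof -
    have "c *\<^sub>R x \<in> closure ((*\<^sub>R) c ` S)"
      using closure_scaleR[of c S] that by blast
    moreover have "(*\<^sub>R) c ` S \<subseteq> S"
      using assms by (auto simp: subspace_mul)
    ultimately show ?thesis
      using closure_mono by blast
  qed
qed

lemma closed_orthogonal_comp: "closed (W\<^sup>\<bottom>)"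
proof -
  have "W\<^sup>\<bottom> = (\<Inter>y\<in>W. {x. y \<bullet> x = 0})"
    by (auto simp: orthogonal_comp_def orthogonal_def)
  also have "closed \<dots>"
    by (intro closed_INT ballI closed_Collect_eq continuous_intros)
  finally show ?thesis .
qed

lemma exists_dist_less_infdist_add:
  fixes v :: "'a::metric_space"
  assumes "A \<noteq> {}" "e > 0"
  shows "\<exists>a\<in>A. dist v a < infdist v A + e"
proof -
  have "(INF a\<in>A. dist v a) < infdist v A + e"
    using assms infdist_notempty[OF assms(1)] by simp
  then show ?thesis
    using assms(1) by (subst (asm) cINF_less_iff) (auto intro: bdd_belowI2[where m=0])
qed

lemma Cauchy_if_dist_sq_le:
  fixes m :: "nat \<Rightarrow> 'a::metric_space"
  assumes bound: "\<And>i j. (dist (m i) (m j))\<^sup>2 \<le> e i + e j" and "e \<longlonglongrightarrow> 0"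
  shows "Cauchy m"
proof (rule metric_CauchyI)
  fix r :: real
  assume "r > 0"
  then have "r\<^sup>2 / 2 > 0"
    by simp
  then have "\<forall>\<^sub>F n in sequentially. e n < r\<^sup>2 / 2"
    using order_tendstoD(2)[OF \<open>e \<longlonglongrightarrow> 0\<close>] by blast
  then obtain N where N: "\<And>n. n \<ge> N \<Longrightarrow> e n < r\<^sup>2 / 2"
    by (auto simp: eventually_sequentially)
  have "dist (m i) (m j) < r" if "i \<ge> N" "j \<ge> N" for i j
  proof (rule power2_less_imp_less)
    show "(dist (m i) (m j))\<^sup>2 < r\<^sup>2"
      using bound[of i j] N[OF that(1)] N[OF that(2)] by linarith
  qed (use \<open>r > 0\<close> in simp)
  then show "\<exists>N. \<forall>i\<ge>N. \<forall>j\<ge>N. dist (m i) (m j) < r"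
    by blast
qed

lemma parallelogram_law:
  fixes a b :: "'a::real_inner"
  shows "(norm (a + b))\<^sup>2 + (norm (a - b))\<^sup>2 = 2 * (norm a)\<^sup>2 + 2 * (norm b)\<^sup>2"
  by (simp add: power2_norm_eq_inner inner_add_left inner_add_right inner_diff_left
      inner_diff_right inner_commute)

lemma dist_sq_le_parallelogram:
  fixes v :: "'a::real_inner"
  assumes "convex M" "a \<in> M" "b \<in> M" "0 \<le> d"
    and d_le: "\<And>u. u \<in> M \<Longrightarrow> d \<le> norm (v - u)"
  shows "(dist a b)\<^sup>2 \<le> 2 * ((norm (v - a))\<^sup>2 - d\<^sup>2) + 2 * ((norm (v - b))\<^sup>2 - d\<^sup>2)"
proof -
  have "(1/2) *\<^sub>R (a + b) \<in> M"
    using convexD[OF assms(1-3), of "1/2" "1/2"] by (simp add: scaleR_right_distrib)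
  then have "d \<le> norm (v - (1/2) *\<^sub>R (a + b))"
    by (rule d_le)
  also have "\<dots> = norm ((v - a) + (v - b)) / 2"
  proof -
    have "(v - a) + (v - b) = 2 *\<^sub>R (v - (1/2) *\<^sub>R (a + b))"
      by (simp add: algebra_simps scaleR_2)
    then show ?thesis
      by simp
  qed
  finally have "4 * d\<^sup>2 \<le> (norm ((v - a) + (v - b)))\<^sup>2"
    using power_mono[of "2 * d" "norm ((v - a) + (v - b))" 2] \<open>0 \<le> d\<close>
    by (simp add: power_mult_distrib)
  moreover have "(dist a b)\<^sup>2 = (norm ((v - a) - (v - b)))\<^sup>2"
    by (simp add: dist_norm norm_minus_commute)
  ultimately show ?thesis
    using parallelogram_law[of "v - a" "v - b"] unfolding right_diff_distrib by linarith
qed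

lemma nearest_point_exists:
  fixes v :: "'a::{real_inner,complete_space}"
  assumes "closed M" "convex M" "M \<noteq> {}"
  shows "\<exists>m\<in>M. \<forall>u\<in>M. norm (v - m) \<le> norm (v - u)"
proof -
  define d where "d = infdist v M"
  have d_le: "d \<le> norm (v - u)" if "u \<in> M" for u
    using infdist_le[OF that, of v] by (simp add: d_def dist_norm)
  have "0 \<le> d"
    by (simp add: d_def infdist_nonneg)
  have "\<forall>n. \<exists>u\<in>M. norm (v - u) < d + inverse (Suc n)"
    using exists_dist_less_infdist_add[OF assms(3)] by (simp add: d_def dist_norm)
  then obtain m where m_in: "\<And>n. m n \<in> M"
    and m_close: "\<And>n. norm (v - m n) < d + inverse (Suc n)"
    by metis
  define e where "e n = 2 * ((d + inverse (Suc n))\<^sup>2 - d\<^sup>2)" for n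
  have sq: "(norm (v - m n))\<^sup>2 \<le> (d + inverse (Suc n))\<^sup>2" for n
    using power_mono[OF less_imp_le[OF m_close[of n]], of 2] by simp
  have "(dist (m i) (m j))\<^sup>2 \<le> e i + e j" for i j
    using dist_sq_le_parallelogram[OF assms(2) m_in[of i] m_in[of j] \<open>0 \<le> d\<close> d_le]
      sq[of i] sq[of j]
    unfolding e_def right_diff_distrib by linarith
  moreover have "e \<longlonglongrightarrow> 2 * ((d + 0)\<^sup>2 - d\<^sup>2)"
    unfolding e_def by (intro tendsto_intros LIMSEQ_inverse_real_of_nat)
  ultimately have "Cauchy m"
    by (intro Cauchy_if_dist_sq_le[where e=e]) simp_all
  then obtain l where l: "m \<longlonglongrightarrow> l"
    using Cauchy_convergent_iff convergent_def by blast
  have "l \<in> M"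
    using assms(1) m_in l closed_sequentially by blast
  moreover have "norm (v - l) \<le> d"
  proof (rule LIMSEQ_le)
    show "(\<lambda>n. norm (v - m n)) \<longlonglongrightarrow> norm (v - l)"
      by (intro tendsto_intros l)
    show "(\<lambda>n. d + inverse (Suc n)) \<longlonglongrightarrow> d"
      using tendsto_add[OF tendsto_const LIMSEQ_inverse_real_of_nat, of d] by simp
    show "\<exists>N. \<forall>n\<ge>N. norm (v - m n) \<le> d + inverse (Suc n)"
      using m_close less_imp_le by blast
  qed
  ultimately show ?thesis
    using d_le by force
qed

lemma nonneg_quadratic_imp_linear_coeff_eq_0:
  fixes p q :: real
  assumes "\<And>t. 2 * t * p \<le> t\<^sup>2 * q"
  shows "p = 0"
proof -
  define a where "a = \<bar>q\<bar> + 1"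
  have a: "a > 0" "\<bar>q\<bar> < 2 * a"
    by (auto simp: a_def)
  have "2 * (p / a) * p \<le> (p / a)\<^sup>2 * \<bar>q\<bar>"
    using assms[of "p / a"] mult_left_mono[OF abs_ge_self[of q], of "(p / a)\<^sup>2"] by simp
  then have "2 * a * p\<^sup>2 \<le> p\<^sup>2 * \<bar>q\<bar>"
    using a by (simp add: power2_eq_square field_simps)
  then have "p\<^sup>2 * (2 * a - \<bar>q\<bar>) \<le> 0"
    by (simp add: algebra_simps)
  then show ?thesis
    using a by (simp add: mult_le_0_iff)
qed

lemma nearest_point_orthogonal:
  fixes v :: "'a::real_inner"
  assumes "subspace M" "m \<in> M" and nearest: "\<And>u. u \<in> M \<Longrightarrow> norm (v - m) \<le> norm (v - u)"
  shows "v - m \<in> M\<^sup>\<bottom>"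
  unfolding orthogonal_comp_def orthogonal_def
proof (intro CollectI ballI)
  fix u
  assume "u \<in> M"
  have "(v - m) \<bullet> u = 0"
  proof (rule nonneg_quadratic_imp_linear_coeff_eq_0)
    fix t
    have "m + t *\<^sub>R u \<in> M"
      using assms(1,2) \<open>u \<in> M\<close> by (intro subspace_add subspace_mul)
    then have "(norm (v - m))\<^sup>2 \<le> (norm ((v - m) - t *\<^sub>R u))\<^sup>2"
      using nearest by (intro power_mono) (auto simp: algebra_simps)
    also have "\<dots> = (norm (v - m))\<^sup>2 - 2 * t * ((v - m) \<bullet> u) + t\<^sup>2 * (u \<bullet> u)"
      unfolding power2_norm_eq_inner
      by (simp add: inner_diff_left inner_diff_right inner_commute power2_eq_square algebra_simps)
    finally show "2 * t * ((v - m) \<bullet> u) \<le> t\<^sup>2 * (u \<bullet> u)"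
      by simp
  qed
  then show "u \<bullet> (v - m) = 0"
    by (simp add: inner_commute)
qed

lemma orthogonal_projection_exists:
  fixes v :: "'a::{real_inner,complete_space}"
  assumes "closed M" "subspace M"
  shows "\<exists>m\<in>M. v - m \<in> M\<^sup>\<bottom>"
  using nearest_point_exists[OF assms(1) subspace_imp_convex[OF assms(2)], of v]
    nearest_point_orthogonal[OF assms(2)] assms(2) subspace_0 by blast

lemma orthogonal_comp_orthogonal_comp:
  fixes X :: "'a::{real_inner,complete_space} set"
  shows "X\<^sup>\<bottom>\<^sup>\<bottom> = closure (span X)"
proof
  have "span X \<subseteq> X\<^sup>\<bottom>\<^sup>\<bottom>"
    by (intro span_minimal orthogonal_comp_subset subspace_orthogonal_comp)
  then show "closure (span X) \<subseteq> X\<^sup>\<bottom>\<^sup>\<bottom>"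
    by (intro closure_minimal closed_orthogonal_comp)
next
  show "X\<^sup>\<bottom>\<^sup>\<bottom> \<subseteq> closure (span X)"
  proof
    fix v
    assume v: "v \<in> X\<^sup>\<bottom>\<^sup>\<bottom>"
    obtain m where m: "m \<in> closure (span X)" and vm: "v - m \<in> (closure (span X))\<^sup>\<bottom>"
      using orthogonal_projection_exists[OF closed_closure subspace_closure[OF subspace_span]]
      by blast
    have "X \<subseteq> closure (span X)"
      using closure_subset span_superset by blast
    then have "v - m \<in> X\<^sup>\<bottom>"
      using vm orthogonal_comp_anti_mono by blast
    then have "(v - m) \<bullet> v = 0"
      using v by (auto simp: orthogonal_comp_def orthogonal_def)
    moreover have "(v - m) \<bullet> m = 0"
      using vm m by (auto simp: orthogonal_comp_def orthogonal_def inner_commute)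
    ultimately have "(v - m) \<bullet> (v - m) = 0"
      by (simp add: inner_diff_right)
    then show "v \<in> closure (span X)"
      using m by simp
  qed
qed

lemma riesz_representation:
  fixes f :: "'a::{real_inner,complete_space} \<Rightarrow> real"
  assumes "bounded_linear f"
  shows "\<exists>z. \<forall>x. f x = z \<bullet> x"
proof (cases "\<forall>x. f x = 0")
  case True
  then show ?thesis
    by (intro exI[of _ 0]) auto
next
  case False
  then obtain x0 where x0: "f x0 \<noteq> 0"
    by blast
  interpret f: bounded_linear f
    by fact
  let ?K = "{x. f x = 0}"
  have "closed ?K"
    by (intro closed_Collect_eq continuous_intros f.continuous_on continuous_on_id)
  moreover have "subspace ?K"
    by (auto simp: subspace_def f.add f.scale)
  ultimately obtain m where "f m = 0" and r_orth: "x0 - m \<in> ?K\<^sup>\<bottom>"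
    using orthogonal_projection_exists by blast
  define r where "r = x0 - m"
  have fr: "f r = f x0"
    by (simp add: r_def f.diff \<open>f m = 0\<close>)
  have "r \<bullet> r \<noteq> 0"
    using fr x0 by auto
  have "f x = ((f r / (r \<bullet> r)) *\<^sub>R r) \<bullet> x" for x
  proof -
    have "f (x - (f x / f r) *\<^sub>R r) = 0"
      using fr x0 by (simp add: f.diff f.scale)
    then have "r \<bullet> (x - (f x / f r) *\<^sub>R r) = 0"
      using r_orth by (auto simp: r_def orthogonal_comp_def orthogonal_def inner_commute)
    then have "r \<bullet> x = (f x / f r) * (r \<bullet> r)"
      by (simp add: inner_diff_right)
    then show ?thesis
      using fr x0 \<open>r \<bullet> r \<noteq> 0\<close> by (simp add: field_simps)
  qed
  then show ?thesis
    by blast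
qed

lemma hilbert_adjoint_works:
  fixes T :: "'a::{real_inner,complete_space} \<Rightarrow> 'b::real_inner"
  assumes "bounded_linear T"
  shows "T x \<bullet> y = x \<bullet> adjoint T y"
proof -
  have "\<exists>z. \<forall>x. T x \<bullet> y = x \<bullet> z" for y
    using riesz_representation[OF bounded_linear_compose[OF bounded_linear_inner_left assms]]
    by (auto simp: inner_commute)
  then obtain g where "\<forall>x y. T x \<bullet> y = x \<bullet> g y"
    by metis
  then show ?thesis
    using adjoint_unique by metis
qed

lemma bounded_linear_funpow:
  fixes f :: "'a::real_normed_vector \<Rightarrow> 'a"
  assumes "bounded_linear f"
  shows "bounded_linear (f ^^ n)"
proof (induction n)
  case 0
  then show ?case
    using bounded_linear_ident by (simp add: id_def)
next
  case (Suc n)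
  then show ?case
    using bounded_linear_compose[OF assms] by (simp add: comp_def)
qed

lemma bounded_linear_hilbert_adjoint:
  fixes T :: "'a::{real_inner,complete_space} \<Rightarrow> 'b::real_inner"
  assumes "bounded_linear T"
  shows "bounded_linear (adjoint T)"
proof -
  note adj = hilbert_adjoint_works[OF assms]
  obtain K where "K > 0" and K: "\<And>x. norm (T x) \<le> norm x * K"
    using bounded_linear.pos_bounded[OF assms] by blast
  have norm_le: "norm (adjoint T y) \<le> norm y * K" for y
  proof -
    have "(norm (adjoint T y))\<^sup>2 = T (adjoint T y) \<bullet> y"
      by (simp add: adj power2_norm_eq_inner)
    also have "\<dots> \<le> norm (T (adjoint T y)) * norm y"
      by (rule norm_cauchy_schwarz)
    also have "\<dots> \<le> norm (adjoint T y) * (norm y * K)"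
      using mult_right_mono[OF K[of "adjoint T y"] norm_ge_zero[of y]] by (simp add: algebra_simps)
    finally show ?thesis
      using \<open>K > 0\<close> by (cases "adjoint T y = 0") (auto simp: power2_eq_square)
  qed
  have "adjoint T (a + b) = adjoint T a + adjoint T b" for a b
    using vector_eq_ldot by (metis adj inner_add_right)
  moreover have "adjoint T (r *\<^sub>R a) = r *\<^sub>R adjoint T a" for r a
    using vector_eq_ldot by (metis adj inner_scaleR_right)
  ultimately show ?thesis
    using norm_le by (intro bounded_linear_intro[where K=K])
qed

lemma hilbert_adjoint_funpow_works:
  fixes T :: "'a::{real_inner,complete_space} \<Rightarrow> 'a"
  assumes "bounded_linear T"
  shows "(T ^^ n) u \<bullet> v = u \<bullet> (adjoint T ^^ n) v"
proof (induction n arbitrary: v)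
  case 0
  then show ?case
    by simp
next
  case (Suc n)
  have "(T ^^ Suc n) u \<bullet> v = (T ^^ n) u \<bullet> adjoint T v"
    by (simp add: hilbert_adjoint_works[OF assms])
  also have "\<dots> = u \<bullet> (adjoint T ^^ Suc n) v"
    by (simp add: Suc funpow_Suc_right del: funpow.simps)
  finally show ?case .
qed

lemma norm_hilbert_adjoint_funpow_le:
  fixes T :: "'a::{real_inner,complete_space} \<Rightarrow> 'a"
  assumes "bounded_linear T" and bound: "\<And>y. norm ((T ^^ n) y) \<le> M * norm y"
  shows "norm ((adjoint T ^^ n) w) \<le> M * norm w"
proof -
  define z where "z = (adjoint T ^^ n) w"
  have "norm z * norm z = z \<bullet> z"
    by (simp add: dot_square_norm power2_eq_square)
  also have "\<dots> = (T ^^ n) z \<bullet> w"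
    by (simp add: hilbert_adjoint_funpow_works[OF assms(1)] z_def)
  also have "\<dots> \<le> norm ((T ^^ n) z) * norm w"
    by (rule norm_cauchy_schwarz)
  also have "\<dots> \<le> norm z * (M * norm w)"
    using mult_right_mono[OF bound[of z] norm_ge_zero[of w]] by (simp add: algebra_simps)
  finally have "norm z * norm z \<le> norm z * (M * norm w)" .
  moreover have "0 \<le> M * norm w"
    using bound[of w] norm_ge_zero order_trans by blast
  ultimately show ?thesis
    by (cases "z = 0") (auto simp: z_def)
qed

section \<open>Operators bounded below\<close>

definition bounded_below_by :: "real \<Rightarrow> ('a::real_normed_vector \<Rightarrow> 'b::real_normed_vector) \<Rightarrow> bool"
  where "bounded_below_by c f \<longleftrightarrow> (\<forall>x. c * norm x \<le> norm (f x))"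

lemma bounded_below_by_mono:
  "c' \<le> c \<Longrightarrow> bounded_below_by c f \<Longrightarrow> bounded_below_by c' f"
  unfolding bounded_below_by_def by (meson mult_right_mono norm_ge_zero order_trans)

lemma bounded_below_by_diff:
  assumes "bounded_below_by c f" and "\<And>x. norm (g x) \<le> k * norm x"
  shows "bounded_below_by (c - k) (\<lambda>x. f x - g x)"
  unfolding bounded_below_by_def
proof
  fix x
  have "norm (f x) \<le> norm (g x) + norm (f x - g x)"
    by (rule norm_triangle_sub)
  moreover have "c * norm x \<le> norm (f x)"
    using assms(1) by (simp add: bounded_below_by_def)
  ultimately show "(c - k) * norm x \<le> norm (f x - g x)"
    using assms(2)[of x] by (simp add: left_diff_distrib)
qed

lemma bounded_below_by_imp_inj:
  assumes "linear f" "c > 0" "bounded_below_by c f"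
  shows "inj f"
proof (rule injI)
  fix x y
  assume "f x = f y"
  then have "c * norm (x - y) \<le> 0"
    using assms(3)[unfolded bounded_below_by_def, rule_format, of "x - y"]
    by (simp add: linear_diff[OF assms(1)])
  then show "x = y"
    using \<open>c > 0\<close> by (simp add: mult_le_0_iff)
qed

lemma bounded_below_by_left_inverse:
  fixes f :: "'a::real_normed_vector \<Rightarrow> 'b::real_normed_vector"
  assumes "bounded_linear g" "\<And>x. g (f x) = x"
  shows "bounded_below_by (1 / (onorm g + 1)) f"
proof -
  have "0 \<le> onorm g"
    by (rule onorm_pos_le[OF assms(1)])
  have "norm x \<le> (onorm g + 1) * norm (f x)" for x
  proof -
    have "norm x \<le> onorm g * norm (f x)"
      using onorm[OF assms(1), of "f x"] by (simp add: assms(2))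
    also have "\<dots> \<le> (onorm g + 1) * norm (f x)"
      by (simp add: distrib_right)
    finally show ?thesis .
  qed
  then show ?thesis
    using \<open>0 \<le> onorm g\<close> by (simp add: bounded_below_by_def field_simps)
qed

lemma Cauchy_bounded_below_by:
  fixes f :: "'a::real_normed_vector \<Rightarrow> 'b::real_normed_vector"
  assumes "linear f" "c > 0" "bounded_below_by c f" "Cauchy (\<lambda>n. f (x n))"
  shows "Cauchy x"
proof (rule metric_CauchyI)
  fix e :: real
  assume "e > 0"
  then have "c * e > 0"
    using \<open>c > 0\<close> by simp
  then obtain N where N: "\<forall>m\<ge>N. \<forall>n\<ge>N. dist (f (x m)) (f (x n)) < c * e"
    using metric_CauchyD[OF assms(4)] by blast
  have "dist (x m) (x n) < e" if "m \<ge> N" "n \<ge> N" for m n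
  proof -
    have "c * norm (x m - x n) \<le> norm (f (x m) - f (x n))"
      using assms(3)[unfolded bounded_below_by_def, rule_format, of "x m - x n"]
      by (simp add: linear_diff[OF assms(1)])
    also have "\<dots> < c * e"
      using N that by (simp add: dist_norm)
    finally show ?thesis
      using \<open>c > 0\<close> by (simp add: dist_norm)
  qed
  then show "\<exists>N. \<forall>m\<ge>N. \<forall>n\<ge>N. dist (x m) (x n) < e"
    by blast
qed

lemma closed_range_bounded_below_by:
  fixes f :: "'a::{real_normed_vector,complete_space} \<Rightarrow> 'b::real_normed_vector"
  assumes "bounded_linear f" "c > 0" "bounded_below_by c f"
  shows "closed (range f)"
  unfolding closed_sequential_limits
proof (intro allI impI)
  fix s l
  assume s: "(\<forall>n. s n \<in> range f) \<and> s \<longlonglongrightarrow> l"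
  then have "\<forall>n. \<exists>y. s n = f y"
    by blast
  then obtain x where x: "s = (\<lambda>n. f (x n))"
    by metis
  then have "Cauchy x"
    using s assms bounded_linear.linear Cauchy_bounded_below_by LIMSEQ_imp_Cauchy by blast
  then obtain y where "x \<longlonglongrightarrow> y"
    using Cauchy_convergent_iff convergent_def by blast
  then have "s \<longlonglongrightarrow> f y"
    unfolding x by (rule bounded_linear.tendsto[OF assms(1)])
  then show "l \<in> range f"
    using s LIMSEQ_unique by blast
qed

text \<open>Solve \<open>f x - g x = y\<close> as the fixed point of the contraction
  \<open>x \<mapsto> f\<^sup>-\<^sup>1 (y + g x)\<close>.\<close>

lemma surj_diff_bounded_below_by:
  fixes f g :: "'a::{real_normed_vector,complete_space} \<Rightarrow> 'b::real_normed_vector"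
  assumes f: "linear f" "surj f" "bounded_below_by c f"
    and g: "linear g" "\<And>x. norm (g x) \<le> k * norm x" and k: "0 \<le> k" "k < c"
  shows "surj (\<lambda>x. f x - g x)"
proof -
  define h where "h = inv f"
  have fh: "f (h y) = y" for y
    using f(2) by (simp add: h_def surj_f_inv_f)
  have h_lipschitz: "c * norm (h a - h b) \<le> norm (a - b)" for a b
    using f(3)[unfolded bounded_below_by_def, rule_format, of "h a - h b"]
    by (simp add: linear_diff[OF f(1)] fh)
  show ?thesis
    unfolding surj_def
  proof
    fix y
    define F where "F x = h (y + g x)" for x
    have "dist (F x1) (F x2) \<le> (k / c) * dist x1 x2" for x1 x2
    proof -
      have "c * norm (F x1 - F x2) \<le> norm (g (x1 - x2))"
        using h_lipschitz[of "y + g x1" "y + g x2"] by (simp add: F_def linear_diff[OF g(1)])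
      also have "\<dots> \<le> k * norm (x1 - x2)"
        by (rule g(2))
      finally show ?thesis
        using k by (simp add: dist_norm field_simps)
    qed
    moreover have "0 \<le> k / c" "k / c < 1"
      using k by auto
    ultimately obtain x where "F x = x"
      using banach_fix_type by blast
    then have "f x - g x = y"
      using fh[of "y + g x"] by (simp add: F_def)
    then show "\<exists>x. y = f x - g x"
      by metis
  qed
qed

lemma surj_self_adjoint_bounded_below_by:
  fixes B :: "'a::{real_inner,complete_space} \<Rightarrow> 'a"
  assumes "bounded_linear B" "c > 0" "bounded_below_by c B"
    and self_adjoint: "\<And>x y. B x \<bullet> y = x \<bullet> B y"
  shows "surj B"
proof -
  have "closed (range B)"
    by (rule closed_range_bounded_below_by[OF assms(1-3)])
  moreover have "subspace (range B)"
    using assms(1) bounded_linear.linear linear_subspace_image subspace_UNIV by blast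
  ultimately have "v \<in> range B" for v
  proof -
    obtain m where "m \<in> range B" and orth: "v - m \<in> (range B)\<^sup>\<bottom>"
      using orthogonal_projection_exists \<open>closed (range B)\<close> \<open>subspace (range B)\<close> by blast
    have "B (v - m) \<bullet> B (v - m) = (v - m) \<bullet> B (B (v - m))"
      by (rule self_adjoint)
    also have "\<dots> = 0"
      using orth by (auto simp: orthogonal_comp_def orthogonal_def inner_commute[of "v - m"])
    finally have "c * norm (v - m) \<le> 0"
      using assms(3)[unfolded bounded_below_by_def, rule_format, of "v - m"] by simp
    then show ?thesis
      using \<open>m \<in> range B\<close> \<open>c > 0\<close> by (simp add: mult_le_0_iff)
  qed
  then show ?thesis
    by blast
qed

section \<open>Complex structure\<close>

locale complex_hilbert_space =
  fixes J :: "'a::{real_inner,complete_space} \<Rightarrow> 'a"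
  assumes complex_structure: "complex_structure J"
begin

lemma linear_J: "linear J"
  using complex_structure by (simp add: complex_structure_def)

lemma J_J [simp]: "J (J x) = - x"
  using complex_structure by (simp add: complex_structure_def)

lemma inner_J_J [simp]: "J x \<bullet> J y = x \<bullet> y"
  using complex_structure by (simp add: complex_structure_def)

lemma inner_J_left: "J x \<bullet> y = - (x \<bullet> J y)"
  by (metis J_J inner_J_J inner_minus_left)

lemma inner_J_self [simp]: "x \<bullet> J x = 0" "J x \<bullet> x = 0"
  using inner_J_left[of x x] by (auto simp: inner_commute)

lemma norm_J [simp]: "norm (J x) = norm x"
  by (simp add: norm_eq_sqrt_inner)

sublocale J: bounded_linear J
  by (rule bounded_linear_intro[where K=1])
    (simp_all add: linear_add[OF linear_J] linear_scale[OF linear_J])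

declare J.add [simp] J.diff [simp] J.scaleR [simp] J.neg [simp] J.zero [simp]

abbreviation cscale_J :: "complex \<Rightarrow> 'a \<Rightarrow> 'a"  (infixr \<open>*\<^sub>J\<close> 75)
  where "c *\<^sub>J x \<equiv> cscale J c x"

lemma cscale_zero_left [simp]: "0 *\<^sub>J x = 0"
  and cscale_one [simp]: "1 *\<^sub>J x = x"
  and cscale_add_right: "c *\<^sub>J (x + y) = c *\<^sub>J x + c *\<^sub>J y"
  and cscale_diff_right: "c *\<^sub>J (x - y) = c *\<^sub>J x - c *\<^sub>J y"
  and cscale_diff_left: "(a - b) *\<^sub>J x = a *\<^sub>J x - b *\<^sub>J x"
  and cscale_minus_left: "(- a) *\<^sub>J x = - (a *\<^sub>J x)"
  and cscale_scaleR_right: "c *\<^sub>J (r *\<^sub>R x) = r *\<^sub>R (c *\<^sub>J x)"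
  and cscale_cscale [simp]: "a *\<^sub>J b *\<^sub>J x = (a * b) *\<^sub>J x"
  by (simp_all add: cscale_def algebra_simps)

lemma linear_cscale: "linear (cscale J c)"
  by (rule linearI) (simp_all add: cscale_add_right cscale_scaleR_right)

lemma norm_cscale: "norm (c *\<^sub>J x) = cmod c * norm x"
proof -
  have "(norm (c *\<^sub>J x))\<^sup>2 = (c *\<^sub>J x) \<bullet> (c *\<^sub>J x)"
    by (simp add: power2_norm_eq_inner)
  also have "\<dots> = ((Re c)\<^sup>2 + (Im c)\<^sup>2) * (x \<bullet> x)"
    by (simp add: cscale_def inner_add_left inner_add_right power2_eq_square algebra_simps)
  also have "\<dots> = (cmod c * norm x)\<^sup>2"
    by (simp add: cmod_power2 power_mult_distrib power2_norm_eq_inner)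
  finally show ?thesis
    by (simp add: power2_eq_iff_nonneg)
qed

lemma bounded_clinear_op_cscale:
  assumes "bounded_clinear_op J T"
  shows "T (c *\<^sub>J x) = c *\<^sub>J T x"
  using assms by (simp add: bounded_clinear_op_def cscale_def linear_add linear_scale
      bounded_linear.linear)

text \<open>Linear in the second argument, conjugate-linear in the first.\<close>

definition cinner :: "'a \<Rightarrow> 'a \<Rightarrow> complex"
  where "cinner x y = Complex (x \<bullet> y) (J x \<bullet> y)"

lemma Re_cinner [simp]: "Re (cinner x y) = x \<bullet> y"
  by (simp add: cinner_def)

lemma cinner_cscale_right: "cinner x (c *\<^sub>J y) = c * cinner x y"
  and cinner_add_right: "cinner x (y + z) = cinner x y + cinner x z"
  and cinner_diff_right: "cinner x (y - z) = cinner x y - cinner x z"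
  and cinner_scaleR_right: "cinner x (r *\<^sub>R y) = r *\<^sub>R cinner x y"
  by (simp_all add: cinner_def cscale_def complex_eq_iff inner_add_right inner_diff_right
      inner_J_left algebra_simps)

lemma norm_cinner_le: "cmod (cinner x y) \<le> norm x * norm y"
proof -
  define z where "z = cinner x y"
  have "(cmod z)\<^sup>2 = Re (cnj z * z)"
    using cmod_power2[of z] by (simp add: power2_eq_square)
  also have "\<dots> = Re (cinner x (cnj z *\<^sub>J y))"
    by (simp only: cinner_cscale_right z_def)
  also have "\<dots> = x \<bullet> (cnj z *\<^sub>J y)"
    by simp
  also have "\<dots> \<le> cmod z * (norm x * norm y)"
    using norm_cauchy_schwarz[of x "cnj z *\<^sub>J y"] by (simp add: norm_cscale ac_simps)
  finally show ?thesis
    by (cases "z = 0") (auto simp: z_def power2_eq_square)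
qed

lemma bounded_linear_cinner_right: "bounded_linear (cinner x)"
proof (rule bounded_linear_intro[where K="norm x"])
  show "cmod (cinner x y) \<le> norm y * norm x" for y
    using norm_cinner_le[of x y] by (simp add: mult.commute)
qed (simp_all add: cinner_add_right cinner_scaleR_right)

end

section \<open>The spectral radius bound\<close>

lemma norm_fps_nth_le_Cauchy:
  fixes f :: "complex \<Rightarrow> complex"
  assumes "f has_fps_expansion F" "f holomorphic_on ball 0 r" "0 < \<rho>" "\<rho> < r"
    and bound: "\<And>u. norm u = \<rho> \<Longrightarrow> norm (f u) \<le> B"
  shows "norm (fps_nth F n) \<le> B / \<rho> ^ n"
proof -
  have "cball 0 \<rho> \<subseteq> ball 0 r"
    using assms(4) by auto
  then have "norm ((deriv ^^ n) f 0) \<le> fact n * B / \<rho> ^ n"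
    using assms(2,3) bound
    by (intro Cauchy_inequality holomorphic_on_subset[OF assms(2)] continuous_on_subset[OF
          holomorphic_on_imp_continuous_on[OF assms(2)]]) auto
  then show ?thesis
    by (simp add: fps_nth_fps_expansion[OF assms(1)] norm_divide field_simps)
qed

lemma compact_uniform_lower_bound:
  fixes K :: "'a::metric_space set" and P :: "real \<Rightarrow> 'a \<Rightarrow> bool"
  assumes "compact K"
    and local: "\<And>\<mu>. \<mu> \<in> K \<Longrightarrow> \<exists>c>0. \<exists>r>0. \<forall>\<nu>\<in>ball \<mu> r. P c \<nu>"
    and mono: "\<And>c c' \<nu>. c' \<le> c \<Longrightarrow> P c \<nu> \<Longrightarrow> P c' \<nu>"
  shows "\<exists>c>0. \<forall>\<nu>\<in>K. P c \<nu>"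
proof -
  obtain c r where cr: "\<And>\<mu>. \<mu> \<in> K \<Longrightarrow> c \<mu> > 0 \<and> r \<mu> > 0 \<and> (\<forall>\<nu>\<in>ball \<mu> (r \<mu>). P (c \<mu>) \<nu>)"
    using local by metis
  have "\<mu> \<in> ball \<mu> (r \<mu>)" if "\<mu> \<in> K" for \<mu>
    using cr[OF that] by simp
  then have "K \<subseteq> (\<Union>\<mu>\<in>K. ball \<mu> (r \<mu>))"
    by blast
  then obtain F where F: "F \<subseteq> K" "finite F" "K \<subseteq> (\<Union>\<mu>\<in>F. ball \<mu> (r \<mu>))"
    by (rule compactE_image[OF assms(1) open_ball])
  define c0 where "c0 = Min (insert 1 (c ` F))"
  have "c0 > 0"
    unfolding c0_def using F(1,2) cr by (subst Min_gr_iff) auto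
  moreover have "P c0 \<nu>" if \<nu>: "\<nu> \<in> K" for \<nu>
  proof -
    obtain \<mu> where "\<mu> \<in> F" "\<nu> \<in> ball \<mu> (r \<mu>)"
      using F(3) \<nu> by blast
    then have "P (c \<mu>) \<nu>"
      using cr F(1) by blast
    moreover have "c0 \<le> c \<mu>"
      unfolding c0_def using F(2) \<open>\<mu> \<in> F\<close> by (intro Min_le) auto
    ultimately show ?thesis
      using mono by blast
  qed
  ultimately show ?thesis
    by blast
qed

locale ap_spectrum_in_disc = complex_hilbert_space +
  fixes T :: "'a \<Rightarrow> 'a"
  assumes bounded_clinear_T: "bounded_clinear_op J T"
    and ap_spectrum_subset: "approx_point_spectrum J T \<subseteq> cball 0 1"
begin

sublocale T: bounded_linear T
  using bounded_clinear_T by (simp add: bounded_clinear_op_def)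

lemma T_cscale: "T (c *\<^sub>J x) = c *\<^sub>J T x"
  using bounded_clinear_T by (rule bounded_clinear_op_cscale)

lemma norm_cscale_T_le: "norm (c *\<^sub>J T x) \<le> cmod c * onorm T * norm x"
  using onorm[OF T.bounded_linear_axioms, of x]
  by (simp add: norm_cscale mult.assoc mult_left_mono)

definition I_minus :: "complex \<Rightarrow> 'a \<Rightarrow> 'a"
  where "I_minus \<mu> x = x - \<mu> *\<^sub>J T x"

lemma I_minus_0 [simp]: "I_minus 0 = id"
  by (auto simp: I_minus_def)

lemma linear_I_minus: "linear (I_minus \<mu>)"
  unfolding I_minus_def
  by (intro linear_compose_sub linear_ident linear_compose[OF T.linear linear_cscale,
        unfolded comp_def])

lemma I_minus_cscale: "I_minus \<mu> (c *\<^sub>J x) = c *\<^sub>J I_minus \<mu> x"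
  by (simp add: I_minus_def T_cscale cscale_diff_right mult.commute)

lemma I_minus_change: "I_minus \<nu> x = I_minus \<mu> x - (\<nu> - \<mu>) *\<^sub>J T x"
  by (simp add: I_minus_def cscale_diff_left)

lemma I_minus_eq_diff: "I_minus \<nu> = (\<lambda>x. I_minus \<mu> x - (\<nu> - \<mu>) *\<^sub>J T x)"
  by (rule ext) (rule I_minus_change)

lemma bounded_below_I_minus_change:
  assumes "bounded_below_by c (I_minus \<mu>)"
  shows "bounded_below_by (c - cmod (\<nu> - \<mu>) * onorm T) (I_minus \<nu>)"
  unfolding I_minus_eq_diff[of \<nu> \<mu>] by (rule bounded_below_by_diff[OF assms norm_cscale_T_le])

lemma surj_I_minus_change:
  assumes "surj (I_minus \<mu>)" "bounded_below_by c (I_minus \<mu>)" "cmod (\<nu> - \<mu>) * onorm T < c"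
  shows "surj (I_minus \<nu>)"
  unfolding I_minus_eq_diff[of \<nu> \<mu>]
  using assms onorm_pos_le[OF T.bounded_linear_axioms] norm_cscale_T_le
    linear_compose[OF T.linear linear_cscale]
  by (intro surj_diff_bounded_below_by[where c=c and k="cmod (\<nu> - \<mu>) * onorm T"] linear_I_minus)
    (simp_all add: comp_def)

lemma I_minus_bounded_below:
  assumes "cmod \<mu> < 1"
  shows "\<exists>c>0. bounded_below_by c (I_minus \<mu>)"
proof (cases "\<mu> = 0")
  case True
  then show ?thesis
    by (intro exI[of _ 1]) (simp add: bounded_below_by_def)
next
  case False
  define l where "l = inverse \<mu>"
  have "cmod l > 1"
    using False assms by (simp add: l_def norm_inverse one_less_inverse_iff)
  then have "l \<notin> approx_point_spectrum J T"
    using ap_spectrum_subset by auto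
  then obtain c where "c > 0" and c: "\<And>x. c * norm x \<le> norm (T x - l *\<^sub>J x)"
    by (auto simp: approx_point_spectrum_def bounded_below_def)
  have "I_minus \<mu> x = - \<mu> *\<^sub>J (T x - l *\<^sub>J x)" for x
    using False by (simp add: I_minus_def cscale_diff_right cscale_minus_left l_def)
  then have "cmod \<mu> * c * norm x \<le> norm (I_minus \<mu> x)" for x
    using c[of x] by (simp add: norm_cscale mult.assoc mult_left_mono)
  then show ?thesis
    using \<open>c > 0\<close> False by (intro exI[of _ "cmod \<mu> * c"]) (simp add: bounded_below_by_def)
qed

lemma I_minus_uniformly_bounded_below:
  assumes "\<rho> < 1"
  shows "\<exists>c>0. \<forall>\<mu>. cmod \<mu> \<le> \<rho> \<longrightarrow> bounded_below_by c (I_minus \<mu>)"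
proof -
  define K where "K = onorm T + 1"
  have "K > 0" "onorm T \<le> K"
    using onorm_pos_le[OF T.bounded_linear_axioms] by (auto simp: K_def)
  have local: "\<exists>c>0. \<exists>r>0. \<forall>\<nu>\<in>ball \<mu> r. bounded_below_by c (I_minus \<nu>)"
    if "\<mu> \<in> cball 0 \<rho>" for \<mu>
  proof -
    have "cmod \<mu> < 1"
      using that assms by simp
    then obtain c where "c > 0" and c: "bounded_below_by c (I_minus \<mu>)"
      using I_minus_bounded_below by blast
    have "bounded_below_by (c / 2) (I_minus \<nu>)" if "\<nu> \<in> ball \<mu> (c / (2 * K))" for \<nu>
    proof -
      have "cmod (\<nu> - \<mu>) * (2 * K) < c"
        using that \<open>K > 0\<close> by (simp add: dist_norm norm_minus_commute pos_less_divide_eq)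
      moreover have "cmod (\<nu> - \<mu>) * onorm T \<le> cmod (\<nu> - \<mu>) * K"
        using \<open>onorm T \<le> K\<close> by (simp add: mult_left_mono)
      ultimately have "c / 2 \<le> c - cmod (\<nu> - \<mu>) * onorm T"
        by linarith
      then show ?thesis
        by (rule bounded_below_by_mono[OF _ bounded_below_I_minus_change[OF c]])
    qed
    then show ?thesis
      using \<open>c > 0\<close> \<open>K > 0\<close> by (intro exI[of _ "c / 2"] conjI exI[of _ "c / (2 * K)"]) auto
  qed
  have "\<exists>c>0. \<forall>\<mu>\<in>cball 0 \<rho>. bounded_below_by c (I_minus \<mu>)"
    using compact_cball local bounded_below_by_mono by (rule compact_uniform_lower_bound)
  then show ?thesis
    by (simp add: Ball_def)
qed

text \<open>Surjectivity is carried from \<open>\<mu> = 0\<close> along the segment \<open>[0, \<mu>]\<close> in steps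
  shorter than the uniform lower bound allows.\<close>

lemma surj_I_minus:
  assumes "cmod \<mu> < 1"
  shows "surj (I_minus \<mu>)"
proof -
  obtain c where "c > 0" and c: "\<And>\<nu>. cmod \<nu> \<le> cmod \<mu> \<Longrightarrow> bounded_below_by c (I_minus \<nu>)"
    using I_minus_uniformly_bounded_below[OF assms] by blast
  have "0 \<le> onorm T"
    using onorm_pos_le[OF T.bounded_linear_axioms] .
  obtain N :: nat where N: "cmod \<mu> * onorm T / c < N"
    using reals_Archimedean2 by blast
  moreover have "0 \<le> cmod \<mu> * onorm T / c"
    using \<open>c > 0\<close> \<open>0 \<le> onorm T\<close> by simp
  ultimately have "N > 0"
    by linarith
  define \<mu>' where "\<mu>' k = (k / N) *\<^sub>R \<mu>" for k :: nat
  have "surj (I_minus (\<mu>' k))" if "k \<le> N" for k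
    using that
  proof (induction k)
    case 0
    then show ?case
      by (simp add: \<mu>'_def)
  next
    case (Suc k)
    have "real k / N \<le> 1"
      using Suc.prems by simp
    then have "cmod (\<mu>' k) \<le> cmod \<mu>"
      using mult_right_mono[of "real k / N" 1 "cmod \<mu>"] by (simp add: \<mu>'_def)
    have "real (Suc k) / N - real k / N = 1 / N"
      by (simp add: diff_divide_distrib[symmetric])
    then have "\<mu>' (Suc k) - \<mu>' k = (1 / N) *\<^sub>R \<mu>"
      by (simp only: \<mu>'_def scaleR_diff_left[symmetric])
    then have "cmod (\<mu>' (Suc k) - \<mu>' k) * onorm T < c"
      using N \<open>N > 0\<close> \<open>c > 0\<close> by (simp add: field_simps)
    then show ?case
      using Suc c[OF \<open>cmod (\<mu>' k) \<le> cmod \<mu>\<close>] surj_I_minus_change by simp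
  qed
  from this[of N] show ?thesis
    using \<open>N > 0\<close> by (simp add: \<mu>'_def)
qed


definition I_minus_inv :: "complex \<Rightarrow> 'a \<Rightarrow> 'a"
  where "I_minus_inv \<mu> = inv (I_minus \<mu>)"

lemma I_minus_I_minus_inv [simp]: "cmod \<mu> < 1 \<Longrightarrow> I_minus \<mu> (I_minus_inv \<mu> y) = y"
  by (simp add: I_minus_inv_def surj_I_minus surj_f_inv_f)

lemma inj_I_minus: "cmod \<mu> < 1 \<Longrightarrow> inj (I_minus \<mu>)"
  using I_minus_bounded_below bounded_below_by_imp_inj linear_I_minus by blast

lemma I_minus_inv_eqI: "cmod \<mu> < 1 \<Longrightarrow> I_minus \<mu> x = y \<Longrightarrow> I_minus_inv \<mu> y = x"
  using inj_I_minus by (auto simp: I_minus_inv_def)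

lemma norm_I_minus_inv_le:
  "cmod \<mu> < 1 \<Longrightarrow> bounded_below_by c (I_minus \<mu>) \<Longrightarrow> c * norm (I_minus_inv \<mu> y) \<le> norm y"
  unfolding bounded_below_by_def by (metis I_minus_I_minus_inv)

lemma I_minus_inv_expand:
  assumes "cmod \<mu> < 1"
  shows "I_minus_inv \<mu> z = z + \<mu> *\<^sub>J I_minus_inv \<mu> (T z)"
proof (rule I_minus_inv_eqI[OF assms])
  show "I_minus \<mu> (z + \<mu> *\<^sub>J I_minus_inv \<mu> (T z)) = z"
    using assms by (simp add: linear_add[OF linear_I_minus] I_minus_cscale) (simp add: I_minus_def)
qed

lemma I_minus_inv_resolvent_identity:
  assumes "cmod \<mu> < 1" "cmod \<nu> < 1"
  shows "I_minus_inv \<mu> y - I_minus_inv \<nu> y = (\<mu> - \<nu>) *\<^sub>J I_minus_inv \<mu> (T (I_minus_inv \<nu> y))"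
proof (rule injD[OF inj_I_minus[OF assms(1)]])
  have "I_minus \<mu> (I_minus_inv \<nu> y) = y - (\<mu> - \<nu>) *\<^sub>J T (I_minus_inv \<nu> y)"
    using I_minus_change[of \<mu> "I_minus_inv \<nu> y" \<nu>] assms(2) by simp
  then show "I_minus \<mu> (I_minus_inv \<mu> y - I_minus_inv \<nu> y) =
      I_minus \<mu> ((\<mu> - \<nu>) *\<^sub>J I_minus_inv \<mu> (T (I_minus_inv \<nu> y)))"
    using assms by (simp add: linear_diff[OF linear_I_minus] I_minus_cscale)
qed

lemma I_minus_eventually_bounded_below:
  assumes "cmod \<nu> < 1"
  shows "\<exists>c>0. \<forall>\<^sub>F \<mu> in at \<nu>. cmod \<mu> < 1 \<and> bounded_below_by c (I_minus \<mu>)"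
proof -
  define \<rho> where "\<rho> = (1 + cmod \<nu>) / 2"
  have "\<rho> < 1"
    using assms by (simp add: \<rho>_def)
  then obtain c where "c > 0" and c: "\<And>\<mu>. cmod \<mu> \<le> \<rho> \<Longrightarrow> bounded_below_by c (I_minus \<mu>)"
    using I_minus_uniformly_bounded_below by blast
  have "cmod \<mu> \<le> \<rho>" if "dist \<mu> \<nu> < (1 - cmod \<nu>) / 2" for \<mu>
    using that norm_triangle_sub[of \<mu> \<nu>] by (simp add: \<rho>_def dist_norm)
  then have "\<forall>\<^sub>F \<mu> in at \<nu>. cmod \<mu> < 1 \<and> bounded_below_by c (I_minus \<mu>)"
    unfolding eventually_at using assms \<open>\<rho> < 1\<close> c
    by (intro exI[of _ "(1 - cmod \<nu>) / 2"]) force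
  then show ?thesis
    using \<open>c > 0\<close> by blast
qed

lemma I_minus_inv_tendsto:
  assumes "cmod \<nu> < 1"
  shows "((\<lambda>\<mu>. I_minus_inv \<mu> w) \<longlongrightarrow> I_minus_inv \<nu> w) (at \<nu>)"
proof -
  obtain c where "c > 0" and c: "\<forall>\<^sub>F \<mu> in at \<nu>. cmod \<mu> < 1 \<and> bounded_below_by c (I_minus \<mu>)"
    using I_minus_eventually_bounded_below[OF assms] by blast
  define M where "M = norm (T (I_minus_inv \<nu> w)) / c"
  have "\<forall>\<^sub>F \<mu> in at \<nu>. norm (I_minus_inv \<mu> w - I_minus_inv \<nu> w) \<le> cmod (\<mu> - \<nu>) * M"
    using c
  proof eventually_elim
    case (elim \<mu>)
    then have "c * norm (I_minus_inv \<mu> (T (I_minus_inv \<nu> w))) \<le> norm (T (I_minus_inv \<nu> w))"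
      by (intro norm_I_minus_inv_le) auto
    then have "norm (I_minus_inv \<mu> (T (I_minus_inv \<nu> w))) \<le> M"
      using \<open>c > 0\<close> by (simp add: M_def field_simps)
    then show ?case
      using elim assms
      by (simp add: I_minus_inv_resolvent_identity norm_cscale mult_left_mono)
  qed
  moreover have "((\<lambda>\<mu>. cmod (\<mu> - \<nu>) * M) \<longlongrightarrow> 0) (at \<nu>)"
    by (rule tendsto_mult_left_zero[OF tendsto_norm_zero[OF LIM_zero[OF tendsto_ident_at]]])
  ultimately show ?thesis
    by (subst LIM_zero_iff[symmetric]) (rule Lim_null_comparison)
qed

definition weak_resolvent :: "'a \<Rightarrow> 'a \<Rightarrow> complex \<Rightarrow> complex"
  where "weak_resolvent x y \<mu> = cinner x (I_minus_inv \<mu> y)"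

lemma weak_resolvent_has_field_derivative:
  assumes "cmod \<nu> < 1"
  shows "(weak_resolvent x y has_field_derivative
      cinner x (I_minus_inv \<nu> (T (I_minus_inv \<nu> y)))) (at \<nu>)"
  unfolding has_field_derivative_iff
proof (rule Lim_transform_eventually)
  define w where "w = T (I_minus_inv \<nu> y)"
  show "((\<lambda>\<mu>. cinner x (I_minus_inv \<mu> w)) \<longlongrightarrow> cinner x (I_minus_inv \<nu> w)) (at \<nu>)"
    by (rule bounded_linear.tendsto[OF bounded_linear_cinner_right I_minus_inv_tendsto[OF assms]])
  obtain c where "\<forall>\<^sub>F \<mu> in at \<nu>. cmod \<mu> < 1 \<and> bounded_below_by c (I_minus \<mu>)"
    using I_minus_eventually_bounded_below[OF assms] by blast
  moreover have "\<forall>\<^sub>F \<mu> in at \<nu>. \<mu> \<noteq> \<nu>"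
    by (rule eventually_at_filter[THEN iffD2]) simp
  ultimately show "\<forall>\<^sub>F \<mu> in at \<nu>.
      cinner x (I_minus_inv \<mu> w) = (weak_resolvent x y \<mu> - weak_resolvent x y \<nu>) / (\<mu> - \<nu>)"
  proof eventually_elim
    case (elim \<mu>)
    then show ?case
      using assms
      by (simp add: weak_resolvent_def w_def I_minus_inv_resolvent_identity cinner_cscale_right
          flip: cinner_diff_right)
  qed
qed

lemma holomorphic_weak_resolvent: "weak_resolvent x y holomorphic_on ball 0 1"
  unfolding holomorphic_on_open[OF open_ball]
  by (metis mem_ball_0 weak_resolvent_has_field_derivative)

lemma weak_resolvent_eq_partial_sum:
  assumes "cmod \<mu> < 1"
  shows "(\<Sum>n<N. cinner x ((T ^^ n) y) * \<mu> ^ n) =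
    weak_resolvent x y \<mu> - \<mu> ^ N * cinner x (I_minus_inv \<mu> ((T ^^ N) y))"
proof (induction N)
  case 0
  then show ?case
    by (simp add: weak_resolvent_def)
next
  case (Suc N)
  have "I_minus_inv \<mu> ((T ^^ N) y) = (T ^^ N) y + \<mu> *\<^sub>J I_minus_inv \<mu> ((T ^^ Suc N) y)"
    using I_minus_inv_expand[OF assms, of "(T ^^ N) y"] by simp
  then show ?case
    using Suc by (simp add: cinner_add_right cinner_cscale_right algebra_simps)
qed

lemma norm_funpow_T_le: "norm ((T ^^ n) y) \<le> onorm T ^ n * norm y"
proof (induction n)
  case (Suc n)
  have "norm ((T ^^ Suc n) y) \<le> onorm T * norm ((T ^^ n) y)"
    using onorm[OF T.bounded_linear_axioms, of "(T ^^ n) y"] by simp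
  also have "\<dots> \<le> onorm T ^ Suc n * norm y"
    using mult_left_mono[OF Suc.IH onorm_pos_le[OF T.bounded_linear_axioms]]
    by (simp add: mult.assoc)
  finally show ?case .
qed simp

lemma weak_resolvent_sums:
  assumes "cmod \<mu> < 1" "cmod \<mu> * onorm T < 1"
  shows "(\<lambda>n. cinner x ((T ^^ n) y) * \<mu> ^ n) sums weak_resolvent x y \<mu>"
proof -
  obtain c where "c > 0" "bounded_below_by c (I_minus \<mu>)"
    using I_minus_bounded_below[OF assms(1)] by blast
  have bound: "norm (\<mu> ^ N * cinner x (I_minus_inv \<mu> ((T ^^ N) y)))
      \<le> (cmod \<mu> * onorm T) ^ N * (norm x * norm y / c)" for N
  proof -
    have "c * norm (I_minus_inv \<mu> ((T ^^ N) y)) \<le> onorm T ^ N * norm y"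
      using norm_I_minus_inv_le[OF assms(1) \<open>bounded_below_by c _\<close>] norm_funpow_T_le
      by (rule order_trans)
    then have "norm (I_minus_inv \<mu> ((T ^^ N) y)) \<le> onorm T ^ N * norm y / c"
      using \<open>c > 0\<close> by (simp add: field_simps)
    have "norm (\<mu> ^ N * cinner x (I_minus_inv \<mu> ((T ^^ N) y)))
        = cmod \<mu> ^ N * cmod (cinner x (I_minus_inv \<mu> ((T ^^ N) y)))"
      by (simp add: norm_mult norm_power)
    also have "\<dots> \<le> cmod \<mu> ^ N * (norm x * norm (I_minus_inv \<mu> ((T ^^ N) y)))"
      by (intro mult_left_mono norm_cinner_le) simp
    also have "\<dots> \<le> cmod \<mu> ^ N * (norm x * (onorm T ^ N * norm y / c))"
      using \<open>norm (I_minus_inv \<mu> _) \<le> _\<close> by (intro mult_left_mono) simp_all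
    also have "\<dots> = (cmod \<mu> * onorm T) ^ N * (norm x * norm y / c)"
      by (simp add: power_mult_distrib)
    finally show ?thesis .
  qed
  have "(\<lambda>N. (cmod \<mu> * onorm T) ^ N * (norm x * norm y / c)) \<longlonglongrightarrow> 0"
    using assms(2) onorm_pos_le[OF T.bounded_linear_axioms]
    by (intro tendsto_mult_left_zero LIMSEQ_power_zero) simp
  then have "(\<lambda>N. \<mu> ^ N * cinner x (I_minus_inv \<mu> ((T ^^ N) y))) \<longlonglongrightarrow> 0"
    by (rule Lim_null_comparison[OF always_eventually[OF allI[OF bound]]])
  then have "(\<lambda>N. weak_resolvent x y \<mu> - \<mu> ^ N * cinner x (I_minus_inv \<mu> ((T ^^ N) y)))
      \<longlonglongrightarrow> weak_resolvent x y \<mu> - 0"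
    by (intro tendsto_diff tendsto_const)
  then show ?thesis
    unfolding sums_def weak_resolvent_eq_partial_sum[OF assms(1)] by simp
qed

lemma weak_resolvent_has_fps_expansion:
  "weak_resolvent x y has_fps_expansion Abs_fps (\<lambda>n. cinner x ((T ^^ n) y))"
proof (rule has_fps_expansionI)
  define d where "d = 1 / (onorm T + 1)"
  have "0 \<le> onorm T"
    using onorm_pos_le[OF T.bounded_linear_axioms] .
  then have "d > 0"
    by (simp add: d_def)
  moreover have "(\<lambda>n. cinner x ((T ^^ n) y) * u ^ n) sums weak_resolvent x y u"
    if "dist u 0 < d" for u
  proof (rule weak_resolvent_sums)
    have "cmod u * onorm T + cmod u < 1"
      using that \<open>0 \<le> onorm T\<close> by (simp add: d_def pos_less_divide_eq distrib_left)
    moreover have "0 \<le> cmod u * onorm T"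
      using \<open>0 \<le> onorm T\<close> by simp
    ultimately show "cmod u * onorm T < 1" "cmod u < 1"
      using norm_ge_zero[of u] by linarith+
  qed
  ultimately show "\<forall>\<^sub>F u in nhds 0.
      (\<lambda>n. fps_nth (Abs_fps (\<lambda>n. cinner x ((T ^^ n) y))) n * u ^ n) sums weak_resolvent x y u"
    unfolding eventually_nhds_metric by auto
qed

lemma norm_cinner_funpow_le:
  assumes "s > 1"
  shows "\<exists>C. \<forall>x y n. cmod (cinner x ((T ^^ n) y)) \<le> C * s ^ n * (norm x * norm y)"
proof -
  have "0 < 1 / s" "1 / s < 1"
    using assms by auto
  then obtain c where "c > 0" and c: "\<And>\<mu>. cmod \<mu> \<le> 1 / s \<Longrightarrow> bounded_below_by c (I_minus \<mu>)"
    using I_minus_uniformly_bounded_below by blast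
  have "cmod (cinner x ((T ^^ n) y)) \<le> 1 / c * s ^ n * (norm x * norm y)" for x y n
  proof -
    have "cmod (weak_resolvent x y u) \<le> norm x * norm y / c" if "cmod u = 1 / s" for u
    proof -
      have "c * norm (I_minus_inv u y) \<le> norm y"
        using that \<open>1 / s < 1\<close> c[of u] by (intro norm_I_minus_inv_le) auto
      then have "norm x * norm (I_minus_inv u y) \<le> norm x * (norm y / c)"
        using \<open>c > 0\<close> by (intro mult_left_mono) (simp_all add: field_simps)
      then show ?thesis
        using norm_cinner_le[of x "I_minus_inv u y"] by (simp add: weak_resolvent_def)
    qed
    then have "cmod (fps_nth (Abs_fps (\<lambda>n. cinner x ((T ^^ n) y))) n)
        \<le> norm x * norm y / c / (1 / s) ^ n"
      using \<open>0 < 1 / s\<close> \<open>1 / s < 1\<close>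
      by (intro norm_fps_nth_le_Cauchy[OF weak_resolvent_has_fps_expansion
            holomorphic_weak_resolvent]) auto
    then show ?thesis
      by (simp add: power_one_over field_simps)
  qed
  then show ?thesis
    by blast
qed

lemma norm_funpow_le_geometric:
  assumes "s > 1"
  shows "\<exists>C. \<forall>n y. norm ((T ^^ n) y) \<le> C * s ^ n * norm y"
proof -
  obtain C where C: "\<And>x y n. cmod (cinner x ((T ^^ n) y)) \<le> C * s ^ n * (norm x * norm y)"
    using norm_cinner_funpow_le[OF assms] by blast
  have "norm ((T ^^ n) y) \<le> max C 0 * s ^ n * norm y" for n y
  proof -
    let ?z = "(T ^^ n) y"
    have "norm ?z * norm ?z \<le> cmod (cinner ?z ?z)"
      using complex_Re_le_cmod[of "cinner ?z ?z"] by (simp add: dot_square_norm power2_eq_square)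
    also have "\<dots> \<le> C * s ^ n * (norm ?z * norm y)"
      by (rule C)
    also have "\<dots> \<le> norm ?z * (max C 0 * s ^ n * norm y)"
      using mult_right_mono[of C "max C 0" "s ^ n * (norm ?z * norm y)"] assms
      by (simp add: ac_simps)
    finally show ?thesis
      using assms by (cases "?z = 0") auto
  qed
  then show ?thesis
    by blast
qed

end

section \<open>Weakly concave operators and their Cauchy duals\<close>

lemma log_convex_seq_ge_geometric:
  fixes z :: "nat \<Rightarrow> real"
  assumes pos: "\<And>k. z k > 0" and log_convex: "\<And>k. (z (Suc k))\<^sup>2 \<le> z k * z (Suc (Suc k))"
  shows "(z 1 / z 0) ^ k * z 0 \<le> z k"
proof -
  define q where "q = z 1 / z 0"
  have "q \<ge> 0"
    using pos[of 0] pos[of 1] by (simp add: q_def)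
  have step: "q * z k \<le> z (Suc k)" for k
  proof (induction k)
    case 0
    then show ?case
      using pos[of 0] by (simp add: q_def)
  next
    case (Suc k)
    have "z k * (q * z (Suc k)) \<le> z (Suc k) * z (Suc k)"
      using Suc pos[of "Suc k"] by (simp add: mult_right_mono mult.assoc mult.left_commute)
    also have "\<dots> \<le> z k * z (Suc (Suc k))"
      using log_convex[of k] by (simp add: power2_eq_square)
    finally show ?case
      using pos[of k] by simp
  qed
  have "q ^ k * z 0 \<le> z k"
  proof (induction k)
    case (Suc k)
    then have "q * (q ^ k * z 0) \<le> q * z k"
      using \<open>q \<ge> 0\<close> by (rule mult_left_mono)
    then show ?case
      using step[of k] by simp
  qed simp
  then show ?thesis
    by (simp add: q_def)
qed

locale weakly_concave_operator = complex_hilbert_space +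
  fixes T :: "'a \<Rightarrow> 'a"
  assumes weakly_concave_T: "weakly_concave J T"
begin

sublocale ap_spectrum_in_disc J T
  using weakly_concave_T by unfold_locales (auto simp: weakly_concave_def)

lemma norm_le_norm_T: "norm x \<le> norm (T x)"
  and norm_cauchy_dual_adjoint_le:
    "norm (cauchy_dual T (adjoint T x)) \<le> norm (cauchy_dual T (T x))"
  using weakly_concave_T by (auto simp: weakly_concave_def)

lemma adjoint_T_works: "T x \<bullet> y = x \<bullet> adjoint T y"
  by (rule hilbert_adjoint_works[OF T.bounded_linear_axioms])

sublocale T_adj: bounded_linear "adjoint T"
  by (rule bounded_linear_hilbert_adjoint[OF T.bounded_linear_axioms])

lemma T_J: "T (J x) = J (T x)"
  using bounded_clinear_T by (simp add: bounded_clinear_op_def)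

lemma adjoint_T_J: "adjoint T (J x) = J (adjoint T x)"
proof -
  have "z \<bullet> adjoint T (J x) = z \<bullet> J (adjoint T x)" for z
  proof -
    have "z \<bullet> adjoint T (J x) = T z \<bullet> J x"
      by (simp add: adjoint_T_works)
    also have "\<dots> = - (T (J z) \<bullet> x)"
      by (simp add: T_J inner_J_left inner_commute)
    also have "\<dots> = z \<bullet> J (adjoint T x)"
      by (simp add: adjoint_T_works inner_J_left)
    finally show ?thesis .
  qed
  then show ?thesis
    using vector_eq_ldot by blast
qed

definition gram :: "'a \<Rightarrow> 'a"
  where "gram x = adjoint T (T x)"

lemma inner_gram: "x \<bullet> gram y = T x \<bullet> T y"
  by (simp add: gram_def adjoint_T_works)

lemma gram_self_adjoint: "gram x \<bullet> y = x \<bullet> gram y"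
  by (metis inner_gram inner_commute)

sublocale gram: bounded_linear gram
  using bounded_linear_compose[OF T_adj.bounded_linear_axioms T.bounded_linear_axioms]
  by (simp add: gram_def[abs_def])

lemma gram_J: "gram (J x) = J (gram x)"
  by (simp add: gram_def T_J adjoint_T_J)

lemma gram_bounded_below: "bounded_below_by 1 gram"
  unfolding bounded_below_by_def
proof
  fix x
  have "(norm x)\<^sup>2 \<le> (norm (T x))\<^sup>2"
    using power_mono[OF norm_le_norm_T norm_ge_zero] .
  also have "\<dots> = x \<bullet> gram x"
    by (simp add: inner_gram power2_norm_eq_inner)
  also have "\<dots> \<le> norm x * norm (gram x)"
    by (rule norm_cauchy_schwarz)
  finally show "1 * norm x \<le> norm (gram x)"
    by (cases "x = 0") (auto simp: power2_eq_square)
qed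

lemma bij_gram: "bij gram"
proof (rule bijI)
  show "inj gram"
    using bounded_below_by_imp_inj[OF gram.linear _
        gram_bounded_below] by simp
  show "surj gram"
    using surj_self_adjoint_bounded_below_by[OF gram.bounded_linear_axioms _ gram_bounded_below
        gram_self_adjoint] by simp
qed

lemma gram_inv_gram [simp]: "gram (inv gram y) = y"
  using bij_gram by (simp add: bij_is_surj surj_f_inv_f)

lemma inv_gram_eqI: "gram x = y \<Longrightarrow> inv gram y = x"
  using bij_gram by (auto simp: bij_is_inj)

lemma norm_inv_gram_le: "norm (inv gram y) \<le> norm y"
  using gram_bounded_below[unfolded bounded_below_by_def, rule_format, of "inv gram y"] by simp

sublocale inv_gram: bounded_linear "inv gram"
proof (rule bounded_linear_intro[where K=1])
  show "inv gram (a + b) = inv gram a + inv gram b" for a b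
    by (rule inv_gram_eqI) (simp add: gram.add)
  show "inv gram (r *\<^sub>R a) = r *\<^sub>R inv gram a" for r a
    by (rule inv_gram_eqI) (simp add: gram.scaleR)
  show "norm (inv gram a) \<le> norm a * 1" for a
    using norm_inv_gram_le by simp
qed

lemma inv_gram_self_adjoint: "inv gram a \<bullet> b = a \<bullet> inv gram b"
  using gram_self_adjoint[of "inv gram a" "inv gram b"] by simp

lemma inv_gram_J: "inv gram (J y) = J (inv gram y)"
  by (rule inv_gram_eqI) (simp add: gram_J)

lemma cauchy_dual_eq: "cauchy_dual T y = T (inv gram y)"
proof -
  have "adjoint T \<circ> T = gram"
    by (simp add: gram_def[abs_def] comp_def)
  then show ?thesis
    by (simp add: cauchy_dual_def)
qed

lemma adjoint_cauchy_dual [simp]: "adjoint T (cauchy_dual T y) = y"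
  unfolding cauchy_dual_eq using gram_inv_gram[of y] by (simp only: gram_def)

lemma cauchy_dual_works: "cauchy_dual T u \<bullet> v = u \<bullet> inv gram (adjoint T v)"
  by (simp add: cauchy_dual_eq adjoint_T_works inv_gram_self_adjoint)

lemma norm_cauchy_dual_le: "norm (cauchy_dual T y) \<le> norm y"
proof -
  have "(norm (cauchy_dual T y))\<^sup>2 = y \<bullet> inv gram y"
    unfolding power2_norm_eq_inner by (simp only: cauchy_dual_works adjoint_cauchy_dual)
  also have "\<dots> \<le> norm y * norm (inv gram y)"
    by (rule norm_cauchy_schwarz)
  also have "\<dots> \<le> (norm y)\<^sup>2"
    using mult_left_mono[OF norm_inv_gram_le[of y] norm_ge_zero[of y]]
    by (simp add: power2_eq_square)
  finally show ?thesis
    by (rule power2_le_imp_le) simp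
qed

sublocale T_dual: bounded_linear "cauchy_dual T"
  using bounded_linear_compose[OF T.bounded_linear_axioms inv_gram.bounded_linear_axioms]
  by (simp add: cauchy_dual_eq[abs_def])

lemma cauchy_dual_J: "cauchy_dual T (J y) = J (cauchy_dual T y)"
  by (simp add: cauchy_dual_eq inv_gram_J T_J)

text \<open>\<open>T' T\<^sup>*\<close> is the orthogonal projection onto the range of \<open>T\<close>, which is also the
  range of \<open>T'\<close>.\<close>

definition range_proj :: "'a \<Rightarrow> 'a"
  where "range_proj x = cauchy_dual T (adjoint T x)"

lemma range_proj_self_adjoint: "range_proj x \<bullet> y = x \<bullet> range_proj y"
proof -
  have "range_proj x \<bullet> y = adjoint T x \<bullet> inv gram (adjoint T y)"
    by (simp add: range_proj_def cauchy_dual_works)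
  also have "\<dots> = x \<bullet> T (inv gram (adjoint T y))"
    by (metis adjoint_T_works inner_commute)
  finally show ?thesis
    by (simp add: range_proj_def cauchy_dual_eq)
qed

lemma range_proj_cauchy_dual [simp]: "range_proj (cauchy_dual T y) = cauchy_dual T y"
  by (simp add: range_proj_def)

lemma adjoint_range_proj [simp]: "adjoint T (range_proj x) = adjoint T x"
  by (simp add: range_proj_def)

text \<open>This is where condition (3) of weak concavity enters.\<close>

lemma norm_cauchy_dual_sq_le:
  assumes "w \<in> range (cauchy_dual T)"
  shows "(norm (cauchy_dual T w))\<^sup>2 \<le> norm (cauchy_dual T (cauchy_dual T w)) * norm w"
proof -
  define u where "u = inv gram (adjoint T (cauchy_dual T w))"
  have "(norm (cauchy_dual T w))\<^sup>2 = w \<bullet> u"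
    by (simp add: power2_norm_eq_inner cauchy_dual_works u_def)
  also have "\<dots> = w \<bullet> range_proj u"
    using assms range_proj_self_adjoint[of w u] by auto
  also have "\<dots> \<le> norm w * norm (cauchy_dual T (adjoint T u))"
    using norm_cauchy_schwarz by (simp add: range_proj_def)
  also have "\<dots> \<le> norm w * norm (cauchy_dual T (cauchy_dual T w))"
  proof -
    have "T u = cauchy_dual T w"
      by (simp add: u_def cauchy_dual_eq[symmetric])
    then show ?thesis
      using norm_cauchy_dual_adjoint_le[of u] by (simp add: mult_left_mono)
  qed
  finally show ?thesis
    by (simp add: mult.commute)
qed


section \<open>The subspace \<open>H'\<^sub>u\<close>\<close>

definition Hu_dual :: "'a set"
  where "Hu_dual = (\<Inter>n. range (cauchy_dual T ^^ n))"

lemma cauchy_dual_adjoint_Hu_dual: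
  assumes "w \<in> Hu_dual"
  shows "cauchy_dual T (adjoint T w) = w"
proof -
  obtain v where "w = (cauchy_dual T ^^ Suc 0) v"
    using assms unfolding Hu_dual_def by blast
  then show ?thesis
    by simp
qed

lemma adjoint_in_Hu_dual:
  assumes "w \<in> Hu_dual"
  shows "adjoint T w \<in> Hu_dual"
  unfolding Hu_dual_def
proof
  fix n
  obtain v where "w = (cauchy_dual T ^^ Suc n) v"
    using assms unfolding Hu_dual_def by blast
  then show "adjoint T w \<in> range (cauchy_dual T ^^ n)"
    by simp
qed

lemma cauchy_dual_in_Hu_dual:
  assumes "w \<in> Hu_dual"
  shows "cauchy_dual T w \<in> Hu_dual"
  unfolding Hu_dual_def
proof
  fix n
  obtain v where "w = (cauchy_dual T ^^ n) v"
    using assms unfolding Hu_dual_def by blast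
  then have "cauchy_dual T w = (cauchy_dual T ^^ n) (cauchy_dual T v)"
    by (simp add: funpow_swap1)
  then show "cauchy_dual T w \<in> range (cauchy_dual T ^^ n)"
    by simp
qed

lemma adjoint_funpow_in_Hu_dual: "w \<in> Hu_dual \<Longrightarrow> (adjoint T ^^ k) w \<in> Hu_dual"
  by (induction k) (simp_all add: adjoint_in_Hu_dual)

lemma cauchy_dual_funpow_in_Hu_dual: "w \<in> Hu_dual \<Longrightarrow> (cauchy_dual T ^^ k) w \<in> Hu_dual"
  by (induction k) (simp_all add: cauchy_dual_in_Hu_dual)

lemma cauchy_dual_funpow_adjoint_funpow:
  assumes "w \<in> Hu_dual"
  shows "(cauchy_dual T ^^ k) ((adjoint T ^^ k) w) = w"
proof (induction k)
  case (Suc k)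
  have "(cauchy_dual T ^^ Suc k) ((adjoint T ^^ Suc k) w)
      = (cauchy_dual T ^^ k) (cauchy_dual T (adjoint T ((adjoint T ^^ k) w)))"
    by (simp add: funpow_swap1[of "cauchy_dual T" k])
  then show ?case
    using Suc cauchy_dual_adjoint_Hu_dual[OF adjoint_funpow_in_Hu_dual[OF assms]] by simp
qed simp

lemma adjoint_funpow_cauchy_dual_funpow [simp]: "(adjoint T ^^ k) ((cauchy_dual T ^^ k) y) = y"
proof (induction k)
  case (Suc k)
  have "(adjoint T ^^ Suc k) ((cauchy_dual T ^^ Suc k) y)
      = (adjoint T ^^ k) (adjoint T (cauchy_dual T ((cauchy_dual T ^^ k) y)))"
    by (simp add: funpow_swap1[of "adjoint T" k])
  then show ?case
    using Suc by simp
qed simp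

lemma norm_adjoint_funpow_ge:
  assumes "w \<in> Hu_dual" "w \<noteq> 0"
  shows "(norm (adjoint T w) / norm w) ^ k * norm w \<le> norm ((adjoint T ^^ k) w)"
proof -
  define z where "z k = norm ((adjoint T ^^ k) w)" for k
  have "z k > 0" for k
  proof -
    have "(cauchy_dual T ^^ k) ((adjoint T ^^ k) w) \<noteq> 0"
      using assms by (simp add: cauchy_dual_funpow_adjoint_funpow)
    then show ?thesis
      using linear_0[OF bounded_linear.linear[OF
          bounded_linear_funpow[OF T_dual.bounded_linear_axioms]]]
      by (auto simp: z_def)
  qed
  moreover have "(z (Suc k))\<^sup>2 \<le> z k * z (Suc (Suc k))" for k
  proof -
    define v where "v = (adjoint T ^^ Suc (Suc k)) w"
    have v_in: "v \<in> Hu_dual" and "(adjoint T ^^ Suc k) w \<in> Hu_dual" "(adjoint T ^^ k) w \<in> Hu_dual"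
      by (simp_all only: v_def adjoint_funpow_in_Hu_dual[OF assms(1)])
    then have "cauchy_dual T v = (adjoint T ^^ Suc k) w"
      "cauchy_dual T (cauchy_dual T v) = (adjoint T ^^ k) w"
      by (simp_all add: v_def cauchy_dual_adjoint_Hu_dual)
    moreover have "v \<in> range (cauchy_dual T)"
      using cauchy_dual_adjoint_Hu_dual[OF v_in] by (metis rangeI)
    ultimately show ?thesis
      using norm_cauchy_dual_sq_le[of v] by (simp add: z_def v_def mult.commute)
  qed
  ultimately have "(z 1 / z 0) ^ k * z 0 \<le> z k"
    by (rule log_convex_seq_ge_geometric)
  then show ?thesis
    by (simp add: z_def)
qed

lemma norm_adjoint_Hu_dual_gt:
  assumes w: "w \<in> Hu_dual" and "norm (cauchy_dual T w) < norm w"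
  shows "norm w < norm (adjoint T w)"
proof -
  have "(norm w)\<^sup>2 \<le> norm (cauchy_dual T w) * norm (adjoint T w)"
    using norm_cauchy_dual_sq_le[of "adjoint T w"] cauchy_dual_adjoint_Hu_dual[OF w]
      cauchy_dual_adjoint_Hu_dual[OF adjoint_in_Hu_dual[OF w]]
    by (metis rangeI)
  also have "\<dots> < norm w * norm (adjoint T w)"
  proof (rule mult_strict_right_mono[OF assms(2)])
    show "norm (adjoint T w) > 0"
      using assms(2) T_dual.zero cauchy_dual_adjoint_Hu_dual[OF w] by force
  qed
  finally show ?thesis
    by (simp add: power2_eq_square mult_less_cancel_left)
qed

lemma norm_cauchy_dual_Hu_dual:
  assumes w: "w \<in> Hu_dual"
  shows "norm (cauchy_dual T w) = norm w"
proof (rule ccontr)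
  assume "norm (cauchy_dual T w) \<noteq> norm w"
  then have lt: "norm (cauchy_dual T w) < norm w"
    using norm_cauchy_dual_le[of w] by simp
  then have "w \<noteq> 0"
    by auto
  define q where "q = norm (adjoint T w) / norm w"
  have "q > 1"
    using norm_adjoint_Hu_dual_gt[OF w lt] \<open>w \<noteq> 0\<close> by (simp add: q_def)
  define s where "s = (1 + q) / 2"
  have "1 < s" "s < q"
    using \<open>q > 1\<close> by (auto simp: s_def)
  obtain C where "\<And>n y. norm ((T ^^ n) y) \<le> C * s ^ n * norm y"
    using norm_funpow_le_geometric[OF \<open>1 < s\<close>] by blast
  then have adjoint_bound: "norm ((adjoint T ^^ k) w) \<le> C * s ^ k * norm w" for k
    by (intro norm_hilbert_adjoint_funpow_le[OF T.bounded_linear_axioms])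
  have "q ^ k * norm w \<le> C * s ^ k * norm w" for k
    using order_trans[OF norm_adjoint_funpow_ge[OF w \<open>w \<noteq> 0\<close>, of k] adjoint_bound[of k]]
    by (simp add: q_def)
  then have bound: "(q / s) ^ k \<le> C" for k
    using \<open>w \<noteq> 0\<close> \<open>1 < s\<close> by (simp add: power_divide divide_le_eq)
  obtain k where "C < (q / s) ^ k"
    using real_arch_pow[of "q / s" C] \<open>1 < s\<close> \<open>s < q\<close> by auto
  then show False
    using bound[of k] by simp
qed

lemma inv_gram_Hu_dual:
  assumes "w \<in> Hu_dual"
  shows "inv gram w = w"
proof -
  define x where "x = inv gram w"
  have "(norm w)\<^sup>2 = (norm (T x))\<^sup>2"
    using norm_cauchy_dual_Hu_dual[OF assms] by (simp add: cauchy_dual_eq x_def)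
  also have "\<dots> = x \<bullet> w"
    by (simp add: x_def power2_norm_eq_inner flip: inner_gram)
  finally have "(norm w)\<^sup>2 = w \<bullet> x"
    by (simp add: inner_commute)
  moreover have "norm x \<le> norm w"
    by (simp add: x_def norm_inv_gram_le)
  ultimately have "(norm (w - x))\<^sup>2 \<le> 0"
    using power_mono[OF \<open>norm x \<le> norm w\<close> norm_ge_zero, of 2]
    by (simp add: power2_norm_eq_inner inner_diff_left inner_diff_right inner_commute)
  then show ?thesis
    by (simp add: x_def)
qed

lemma T_Hu_dual: "w \<in> Hu_dual \<Longrightarrow> T w = cauchy_dual T w"
  by (simp add: cauchy_dual_eq inv_gram_Hu_dual)

lemma T_in_Hu_dual: "w \<in> Hu_dual \<Longrightarrow> T w \<in> Hu_dual"
  by (simp add: T_Hu_dual cauchy_dual_in_Hu_dual)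

lemma adjoint_T_Hu_dual: "w \<in> Hu_dual \<Longrightarrow> adjoint T (T w) = w"
  by (simp add: T_Hu_dual)

lemma T_adjoint_Hu_dual: "w \<in> Hu_dual \<Longrightarrow> T (adjoint T w) = w"
  by (simp add: T_Hu_dual adjoint_in_Hu_dual cauchy_dual_adjoint_Hu_dual)

lemma Hu_dual_subset_Hu: "Hu_dual \<subseteq> (\<Inter>n. range (T ^^ n))"
proof (intro subsetI InterI, clarify)
  fix w n
  assume w: "w \<in> Hu_dual"
  have "(T ^^ k) v = (cauchy_dual T ^^ k) v" if "v \<in> Hu_dual" for k v
    using that by (induction k) (simp_all add: T_Hu_dual cauchy_dual_funpow_in_Hu_dual)
  then have "w = (T ^^ n) ((adjoint T ^^ n) w)"
    using cauchy_dual_funpow_adjoint_funpow[OF w] adjoint_funpow_in_Hu_dual[OF w] by metis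
  then show "w \<in> range (T ^^ n)"
    by (metis rangeI)
qed

lemma closed_Hu_dual: "closed Hu_dual"
  unfolding Hu_dual_def
proof (intro closed_INT ballI)
  fix n
  let ?g = "adjoint T ^^ n"
  have "0 \<le> onorm ?g"
    by (rule onorm_pos_le[OF bounded_linear_funpow[OF T_adj.bounded_linear_axioms]])
  then have "1 / (onorm ?g + 1) > 0"
    by simp
  moreover have "bounded_below_by (1 / (onorm ?g + 1)) (cauchy_dual T ^^ n)"
    using bounded_linear_funpow[OF T_adj.bounded_linear_axioms]
    by (rule bounded_below_by_left_inverse) simp
  ultimately show "closed (range (cauchy_dual T ^^ n))"
    by (rule closed_range_bounded_below_by[OF
          bounded_linear_funpow[OF T_dual.bounded_linear_axioms]])
qed

lemma cauchy_dual_funpow_J: "(cauchy_dual T ^^ n) (J y) = J ((cauchy_dual T ^^ n) y)"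
  by (induction n) (simp_all add: cauchy_dual_J)

lemma csubspace_Hu_dual: "csubspace J Hu_dual"
  unfolding csubspace_def
proof
  show "subspace Hu_dual"
    unfolding Hu_dual_def
    by (intro subspace_Inter ballI) (auto intro: linear_subspace_image[OF bounded_linear.linear[OF
          bounded_linear_funpow[OF T_dual.bounded_linear_axioms]] subspace_UNIV])
  show "J ` Hu_dual \<subseteq> Hu_dual"
  proof
    fix v
    assume "v \<in> J ` Hu_dual"
    then obtain w where w: "w \<in> Hu_dual" and v: "v = J w"
      by blast
    show "v \<in> Hu_dual"
      unfolding Hu_dual_def
    proof
      fix n
      obtain u where "w = (cauchy_dual T ^^ n) u"
        using w unfolding Hu_dual_def by blast
      then have "v = (cauchy_dual T ^^ n) (J u)"
        by (simp add: v cauchy_dual_funpow_J)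
      then show "v \<in> range (cauchy_dual T ^^ n)"
        by simp
    qed
  qed
qed

lemma ker_adjoint_orthogonal_Hu_dual:
  assumes "adjoint T x = 0"
  shows "x \<in> Hu_dual\<^sup>\<bottom>"
  unfolding orthogonal_comp_def orthogonal_def
proof (intro CollectI ballI)
  fix y
  assume "y \<in> Hu_dual"
  then have "y \<bullet> x = cauchy_dual T (adjoint T y) \<bullet> x"
    by (simp add: cauchy_dual_adjoint_Hu_dual)
  also have "\<dots> = 0"
    using assms by (simp add: cauchy_dual_works inv_gram.zero)
  finally show "y \<bullet> x = 0" .
qed

lemma range_proj_adjoint_funpow:
  assumes "\<And>e k. adjoint T e = 0 \<Longrightarrow> (T ^^ k) e \<bullet> x = 0"
  shows "range_proj ((adjoint T ^^ k) x) = (adjoint T ^^ k) x"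
proof -
  define u where "u = (adjoint T ^^ k) x"
  define e where "e = u - range_proj u"
  have "adjoint T e = 0"
    by (simp add: e_def T_adj.diff)
  then have "e \<bullet> u = 0"
    using assms[of e k]
    by (simp add: u_def hilbert_adjoint_funpow_works[OF T.bounded_linear_axioms])
  moreover have "e \<bullet> range_proj u = range_proj e \<bullet> u"
    by (simp add: range_proj_self_adjoint)
  then have "e \<bullet> range_proj u = 0"
    using \<open>adjoint T e = 0\<close>
    by (simp add: range_proj_def T_dual.zero)
  ultimately have "e \<bullet> e = 0"
    by (simp add: e_def inner_diff_right)
  then show ?thesis
    by (simp add: e_def u_def)
qed

definition wandering_set :: "'a set"
  where "wandering_set = (\<Union>n. (T ^^ n) ` {x \<in> Hu_dual\<^sup>\<bottom>. adjoint T x = 0})"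

lemma J_wandering_set: "J ` wandering_set \<subseteq> wandering_set"
proof
  fix v
  assume "v \<in> J ` wandering_set"
  then obtain n e where "adjoint T e = 0" "v = J ((T ^^ n) e)"
    unfolding wandering_set_def by auto
  moreover have "(T ^^ n) (J e) = J ((T ^^ n) e)"
    by (induction n) (simp_all add: T_J)
  ultimately have "J e \<in> {x \<in> Hu_dual\<^sup>\<bottom>. adjoint T x = 0}" "v = (T ^^ n) (J e)"
    by (simp_all add: adjoint_T_J ker_adjoint_orthogonal_Hu_dual)
  then show "v \<in> wandering_set"
    unfolding wandering_set_def by blast
qed

lemma Hu_dual_subset_orthogonal_wandering_set: "Hu_dual \<subseteq> wandering_set\<^sup>\<bottom>"
proof
  fix y
  assume y: "y \<in> Hu_dual"
  show "y \<in> wandering_set\<^sup>\<bottom>"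
    unfolding orthogonal_comp_def orthogonal_def
  proof (intro CollectI ballI)
    fix u
    assume "u \<in> wandering_set"
    then obtain n e where e: "e \<in> Hu_dual\<^sup>\<bottom>" and u: "u = (T ^^ n) e"
      unfolding wandering_set_def by auto
    have "(adjoint T ^^ n) y \<bullet> e = 0"
      using e adjoint_funpow_in_Hu_dual[OF y, of n]
      by (simp add: orthogonal_comp_def orthogonal_def)
    moreover have "u \<bullet> y = e \<bullet> (adjoint T ^^ n) y"
      by (simp add: u hilbert_adjoint_funpow_works[OF T.bounded_linear_axioms])
    ultimately show "u \<bullet> y = 0"
      by (simp add: inner_commute)
  qed
qed

lemma orthogonal_wandering_set_subset_Hu_dual: "wandering_set\<^sup>\<bottom> \<subseteq> Hu_dual"
proof
  fix x
  assume x: "x \<in> wandering_set\<^sup>\<bottom>"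
  have "(T ^^ k) e \<bullet> x = 0" if "adjoint T e = 0" for e k
  proof -
    have "(T ^^ k) e \<in> wandering_set"
      using that ker_adjoint_orthogonal_Hu_dual unfolding wandering_set_def by blast
    then show ?thesis
      using x by (auto simp: orthogonal_comp_def orthogonal_def)
  qed
  then have fixed: "range_proj ((adjoint T ^^ n) x) = (adjoint T ^^ n) x" for n
    by (rule range_proj_adjoint_funpow)
  have "(cauchy_dual T ^^ n) ((adjoint T ^^ n) x) = x" for n
  proof (induction n)
    case (Suc n)
    have "(cauchy_dual T ^^ Suc n) ((adjoint T ^^ Suc n) x)
        = (cauchy_dual T ^^ n) (range_proj ((adjoint T ^^ n) x))"
      by (simp add: funpow_swap1[of "cauchy_dual T" n] range_proj_def)
    then show ?case
      using Suc fixed[of n] by simp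
  qed simp
  then show "x \<in> Hu_dual"
    unfolding Hu_dual_def by (metis UNIV_I INT_I rangeI)
qed

end

theorem theorem1p2:
  fixes J T :: "'a::{real_inner, complete_space} \<Rightarrow> 'a"
  assumes "complex_structure J"
    and "weakly_concave J T"
  defines "Hu \<equiv> (\<Inter>n. range (T ^^ n))"
    and "Hu' \<equiv> (\<Inter>n. range (cauchy_dual T ^^ n))"
  shows "Hu' \<subseteq> Hu \<and> reduces J Hu' T \<and> unitary_on Hu' T \<and>
         wandering_subspace_property J (orthogonal_comp Hu') T (adjoint T)"
proof -
  interpret weakly_concave_operator J T
    using assms(1,2) by unfold_locales
  have Hu': "Hu' = Hu_dual"
    by (simp add: Hu'_def Hu_dual_def)
  have invariant: "T ` Hu_dual \<subseteq> Hu_dual" "adjoint T ` Hu_dual \<subseteq> Hu_dual"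
    using T_in_Hu_dual adjoint_in_Hu_dual by blast+
  have "Hu_dual = wandering_set\<^sup>\<bottom>"
    using Hu_dual_subset_orthogonal_wandering_set orthogonal_wandering_set_subset_Hu_dual by blast
  then have "Hu_dual\<^sup>\<bottom> = closure (span wandering_set)"
    by (simp add: orthogonal_comp_orthogonal_comp)
  also have "span wandering_set = cspan J wandering_set"
    using J_wandering_set by (simp add: cspan_def Un_absorb2)
  finally have "wandering_subspace_property J (Hu_dual\<^sup>\<bottom>) T (adjoint T)"
    unfolding wandering_subspace_property_def wandering_set_def[symmetric] .
  then show ?thesis
    unfolding Hu' Hu_def reduces_def unitary_on_def
    using Hu_dual_subset_Hu csubspace_Hu_dual closed_Hu_dual invariant adjoint_T_Hu_dual
      T_adjoint_Hu_dual
    by blast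
qed

end
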